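(* Let $p$ be a lattice norm on $\mathbb{R}^2$ with $p((1,0))=p((0,1))=1$, let $\Phi$ be an Orlicz function with $a(\Phi)>0$, and assume that either $\mu$ is non-atomic with $\mu(\Omega)=\infty$, or $\Omega=\mathbb{N}$, $\Sigma=2^{\mathbb{N}}$ and $\mu$ is the counting measure. Then $(L^\Phi(\mu),\|\cdot\|_{\Phi,p})$ is neither strictly monotone nor strictly convex.
   Context: $(\Omega,\Sigma,\mu)$ is a $\sigma$-finite complete measure space, $L^0$ the space of (classes of a.e. equal) real measurable functions, ordered pointwise a.e. An Orlicz function is a function $\Phi:\mathbb{R}\to[0,\infty)$ which is convex, even, vanishes at $0$ and is not identically zero; $a(\Phi)=\sup\{u\ge0:\Phi(u)=0\}$. $I_\Phi(x)=\int_\Omega\Phi(x(t))\,d\mu\in[0,+\infty]$; $L^\Phi(\mu)=\{x\in L^0: I_\Phi(\lambda x)<\infty\text{ for some }\lambda>0\}$. A lattice norm on $\mathbb{R}^2$ is a norm $p$ with $p((u,v))\le p((u',v'))$ whenever $|u|\le|u'|,|v|\le|v'|$; $\|x\|_{\Phi,p}=\inf_{k>0}\frac1k p((1,I_\Phi(kx)))$ with the convention $p((1,+\infty))=+\infty$. A normed lattice is strictly monotone if $0\le x\le y$, $x\ne y$ imply $\|x\|<\|y\|$; it is strictly convex if $\|x\|=\|y\|=1$, $x\neq y$ imply $\|(x+y)/2\|<1$. *)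

theory Defs
  imports "HOL-Analysis.Analysis"
begin

definition orlicz_function :: "(real \<Rightarrow> real) \<Rightarrow> bool" where
  "orlicz_function \<Phi> \<longleftrightarrow> convex_on UNIV \<Phi> \<and> (\<forall>u. \<Phi> (- u) = \<Phi> u) \<and>
     (\<forall>u. 0 \<le> \<Phi> u) \<and> \<Phi> 0 = 0 \<and> (\<exists>u. \<Phi> u \<noteq> 0)"

definition orlicz_a :: "(real \<Rightarrow> real) \<Rightarrow> real" where
  "orlicz_a \<Phi> = Sup {u. 0 \<le> u \<and> \<Phi> u = 0}"

definition lattice_norm :: "(real \<times> real \<Rightarrow> real) \<Rightarrow> bool" where
  "lattice_norm p \<longleftrightarrow>
     (\<forall>z. p z = 0 \<longleftrightarrow> z = (0, 0)) \<and>
     (\<forall>c z. p (c *\<^sub>R z) = \<bar>c\<bar> * p z) \<and>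
     (\<forall>z w. p (z + w) \<le> p z + p w) \<and>
     (\<forall>u v u' v'. \<bar>u\<bar> \<le> \<bar>u'\<bar> \<and> \<bar>v\<bar> \<le> \<bar>v'\<bar> \<longrightarrow> p (u, v) \<le> p (u', v'))"

definition non_atomic :: "'a measure \<Rightarrow> bool" where
  "non_atomic M \<longleftrightarrow> (\<forall>A\<in>sets M. 0 < emeasure M A \<longrightarrow>
     (\<exists>B\<in>sets M. B \<subseteq> A \<and> 0 < emeasure M B \<and> emeasure M B < emeasure M A))"

definition orlicz_modular :: "'a measure \<Rightarrow> (real \<Rightarrow> real) \<Rightarrow> ('a \<Rightarrow> real) \<Rightarrow> ennreal" where
  "orlicz_modular M \<Phi> x = (\<integral>\<^sup>+ t. ennreal (\<Phi> (x t)) \<partial>M)"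

definition orlicz_space :: "'a measure \<Rightarrow> (real \<Rightarrow> real) \<Rightarrow> ('a \<Rightarrow> real) set" where
  "orlicz_space M \<Phi> = {x \<in> borel_measurable M.
      \<exists>c>0. orlicz_modular M \<Phi> (\<lambda>t. c * x t) < \<infinity>}"

text \<open>p-Amemiya norm, with the convention p((1,+infinity)) = +infinity.\<close>
definition orlicz_p_norm ::
  "'a measure \<Rightarrow> (real \<Rightarrow> real) \<Rightarrow> (real \<times> real \<Rightarrow> real) \<Rightarrow> ('a \<Rightarrow> real) \<Rightarrow> ennreal" where
  "orlicz_p_norm M \<Phi> p x =
     (INF k\<in>{0::real<..}.
        (if orlicz_modular M \<Phi> (\<lambda>t. k * x t) = \<infinity> then \<infinity>
         else ennreal (p (1, enn2real (orlicz_modular M \<Phi> (\<lambda>t. k * x t))) / k)))"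

definition strictly_monotone_orlicz ::
  "'a measure \<Rightarrow> (real \<Rightarrow> real) \<Rightarrow> (real \<times> real \<Rightarrow> real) \<Rightarrow> bool" where
  "strictly_monotone_orlicz M \<Phi> p \<longleftrightarrow>
     (\<forall>x\<in>orlicz_space M \<Phi>. \<forall>y\<in>orlicz_space M \<Phi>.
        (AE t in M. 0 \<le> x t) \<and> (AE t in M. x t \<le> y t) \<and> \<not> (AE t in M. x t = y t)
        \<longrightarrow> orlicz_p_norm M \<Phi> p x < orlicz_p_norm M \<Phi> p y)"

definition strictly_convex_orlicz ::
  "'a measure \<Rightarrow> (real \<Rightarrow> real) \<Rightarrow> (real \<times> real \<Rightarrow> real) \<Rightarrow> bool" where
  "strictly_convex_orlicz M \<Phi> p \<longleftrightarrow>
     (\<forall>x\<in>orlicz_space M \<Phi>. \<forall>y\<in>orlicz_space M \<Phi>.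
        orlicz_p_norm M \<Phi> p x = 1 \<and> orlicz_p_norm M \<Phi> p y = 1 \<and> \<not> (AE t in M. x t = y t)
        \<longrightarrow> orlicz_p_norm M \<Phi> p (\<lambda>t. (x t + y t) / 2) < 1)"

end

theory Submission
  imports Defs
begin

text \<open>
  Let \<open>a = a(\<Phi>)\<close>. A function with \<open>|x| \<le> a\<close> everywhere and \<open>|x| = a\<close> on a set of infinite
  measure has norm 1: for \<open>k < 1\<close> the modular of \<open>kx\<close> vanishes, so the Amemiya term is
  \<open>p(1,0)/k = 1/k\<close>, while for \<open>k > 1\<close> the modular of \<open>kx\<close> is infinite. Since \<open>\<mu>\<close> is
  \<open>\<sigma>\<close>-finite with \<open>\<mu>(\<Omega>) = \<infinity>\<close>, there is a set \<open>B\<close> of finite positive measure, and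
  \<open>\<Omega> - B\<close> still has infinite measure. Hence \<open>x = a\<close>, \<open>y = a - (a/2)\<chi>\<^sub>B\<close> and \<open>(x + y)/2\<close>
  all have norm 1, although \<open>0 \<le> y \<le> x\<close> and \<open>y \<noteq> x\<close>.
\<close>

lemma orlicz_function_abs:
  assumes "orlicz_function \<Phi>"
  shows "\<Phi> \<bar>u\<bar> = \<Phi> u"
  using assms by (cases "0 \<le> u") (auto simp: orlicz_function_def)

lemma orlicz_function_mono:
  assumes \<Phi>: "orlicz_function \<Phi>" and "0 \<le> u" "u \<le> v"
  shows "\<Phi> u \<le> \<Phi> v"
proof (cases "v = 0")
  case True
  then show ?thesis using assms by simp
next
  case False
  then have v: "0 < v" using assms by simp
  have convex: "convex_on UNIV \<Phi>" and zero: "\<Phi> 0 = 0" and nonneg: "0 \<le> \<Phi> v"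
    using \<Phi> by (auto simp: orlicz_function_def)
  have t: "0 \<le> u / v" "u / v \<le> 1" using assms v by auto
  have "\<Phi> u = \<Phi> ((1 - u / v) *\<^sub>R 0 + (u / v) *\<^sub>R v)" using v by simp
  also have "\<dots> \<le> (1 - u / v) * \<Phi> 0 + (u / v) * \<Phi> v"
    using convex_onD[OF convex t] by blast
  also have "\<dots> = (u / v) * \<Phi> v" using zero by simp
  also have "\<dots> \<le> \<Phi> v" using nonneg t by (rule mult_left_le_one_le)
  finally show ?thesis .
qed

lemma orlicz_zero_set_bdd_above:
  assumes \<Phi>: "orlicz_function \<Phi>"
  shows "bdd_above {u. 0 \<le> u \<and> \<Phi> u = 0}"
proof -
  obtain w where w: "\<Phi> w \<noteq> 0" using \<Phi> by (auto simp: orlicz_function_def)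
  have "u \<le> \<bar>w\<bar>" if "0 \<le> u" "\<Phi> u = 0" for u
  proof (rule ccontr)
    assume "\<not> u \<le> \<bar>w\<bar>"
    then have "\<Phi> \<bar>w\<bar> \<le> \<Phi> u" by (intro orlicz_function_mono[OF \<Phi>]) auto
    with that w \<Phi> show False
      by (auto simp: orlicz_function_abs orlicz_function_def intro: antisym)
  qed
  then show ?thesis by (intro bdd_aboveI[where M = "\<bar>w\<bar>"]) auto
qed

lemma orlicz_a_nonneg:
  assumes \<Phi>: "orlicz_function \<Phi>"
  shows "0 \<le> orlicz_a \<Phi>"
  unfolding orlicz_a_def using \<Phi>
  by (intro cSup_upper orlicz_zero_set_bdd_above) (auto simp: orlicz_function_def)

lemma orlicz_function_eq_0:
  assumes \<Phi>: "orlicz_function \<Phi>" and "\<bar>u\<bar> < orlicz_a \<Phi>"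
  shows "\<Phi> u = 0"
proof -
  have "{v. 0 \<le> v \<and> \<Phi> v = 0} \<noteq> {}" using \<Phi> by (auto simp: orlicz_function_def)
  then obtain v where v: "0 \<le> v" "\<Phi> v = 0" "\<bar>u\<bar> < v"
    using assms(2) less_cSup_iff[OF _ orlicz_zero_set_bdd_above[OF \<Phi>]]
    by (auto simp: orlicz_a_def)
  have "\<Phi> \<bar>u\<bar> \<le> \<Phi> v" using v by (intro orlicz_function_mono[OF \<Phi>]) auto
  then show ?thesis using v \<Phi> by (auto simp: orlicz_function_abs orlicz_function_def intro: antisym)
qed

lemma orlicz_function_pos:
  assumes \<Phi>: "orlicz_function \<Phi>" and u: "orlicz_a \<Phi> < \<bar>u\<bar>"
  shows "0 < \<Phi> u"
proof (rule ccontr)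
  assume "\<not> 0 < \<Phi> u"
  then have "\<Phi> \<bar>u\<bar> = 0" using \<Phi> by (auto simp: orlicz_function_abs orlicz_function_def intro: antisym)
  then have "\<bar>u\<bar> \<le> orlicz_a \<Phi>"
    unfolding orlicz_a_def by (intro cSup_upper orlicz_zero_set_bdd_above[OF \<Phi>]) simp
  with u show False by simp
qed

lemma orlicz_modular_eq_0:
  assumes \<Phi>: "orlicz_function \<Phi>" and x: "\<And>t. t \<in> space M \<Longrightarrow> \<bar>x t\<bar> < orlicz_a \<Phi>"
  shows "orlicz_modular M \<Phi> x = 0"
proof -
  have "orlicz_modular M \<Phi> x = (\<integral>\<^sup>+ t. 0 \<partial>M)"
    unfolding orlicz_modular_def
    by (intro nn_integral_cong) (simp add: orlicz_function_eq_0[OF \<Phi> x])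
  then show ?thesis by simp
qed

lemma orlicz_modular_eq_top:
  assumes \<Phi>: "orlicz_function \<Phi>" and S: "S \<in> sets M" "emeasure M S = \<infinity>"
    and c: "orlicz_a \<Phi> < c" "\<And>t. t \<in> S \<Longrightarrow> c \<le> \<bar>x t\<bar>"
  shows "orlicz_modular M \<Phi> x = \<infinity>"
proof -
  have pos: "0 < \<Phi> c" using c(1) orlicz_function_pos[OF \<Phi>] by fastforce
  have "0 \<le> c" using c(1) orlicz_a_nonneg[OF \<Phi>] by simp
  then have "\<Phi> c \<le> \<Phi> (x t)" if "t \<in> S" for t
    using orlicz_function_mono[OF \<Phi> _ c(2)[OF that]] orlicz_function_abs[OF \<Phi>] by simp
  then have "(\<integral>\<^sup>+ t. ennreal (\<Phi> c) * indicator S t \<partial>M) \<le> orlicz_modular M \<Phi> x"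
    unfolding orlicz_modular_def by (intro nn_integral_mono) (auto simp: indicator_def intro: ennreal_leI)
  moreover have "(\<integral>\<^sup>+ t. ennreal (\<Phi> c) * indicator S t \<partial>M) = \<infinity>"
    using nn_integral_cmult_indicator[OF S(1)] S(2) pos by (simp add: ennreal_mult_top)
  ultimately show ?thesis by (simp add: top_unique)
qed

definition amemiya_term ::
  "'a measure \<Rightarrow> (real \<Rightarrow> real) \<Rightarrow> (real \<times> real \<Rightarrow> real) \<Rightarrow> ('a \<Rightarrow> real) \<Rightarrow> real \<Rightarrow> ennreal"
where
  "amemiya_term M \<Phi> p x k =
     (if orlicz_modular M \<Phi> (\<lambda>t. k * x t) = \<infinity> then \<infinity>
      else ennreal (p (1, enn2real (orlicz_modular M \<Phi> (\<lambda>t. k * x t))) / k))"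

lemma orlicz_p_norm_eq_INF_amemiya_term:
  "orlicz_p_norm M \<Phi> p x = (INF k\<in>{0<..}. amemiya_term M \<Phi> p x k)"
  by (simp add: orlicz_p_norm_def amemiya_term_def)

lemma amemiya_term_ge_inverse:
  assumes p: "lattice_norm p" "p (1, 0) = 1" and k: "0 < k"
  shows "ennreal (1 / k) \<le> amemiya_term M \<Phi> p x k"
proof (cases "orlicz_modular M \<Phi> (\<lambda>t. k * x t) = \<infinity>")
  case True
  then show ?thesis by (simp add: amemiya_term_def)
next
  case False
  have "p (1, 0) \<le> p (1, enn2real (orlicz_modular M \<Phi> (\<lambda>t. k * x t)))"
    using p(1) unfolding lattice_norm_def by simp
  then have "1 / k \<le> p (1, enn2real (orlicz_modular M \<Phi> (\<lambda>t. k * x t))) / k"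
    using p(2) k by (simp add: divide_right_mono)
  then show ?thesis using False by (simp add: amemiya_term_def ennreal_leI)
qed

lemma orlicz_p_norm_eq_1:
  assumes \<Phi>: "orlicz_function \<Phi>" and a: "0 < orlicz_a \<Phi>"
    and p: "lattice_norm p" "p (1, 0) = 1"
    and x: "\<And>t. t \<in> space M \<Longrightarrow> \<bar>x t\<bar> \<le> orlicz_a \<Phi>"
    and S: "S \<in> sets M" "emeasure M S = \<infinity>" "\<And>t. t \<in> S \<Longrightarrow> \<bar>x t\<bar> = orlicz_a \<Phi>"
  shows "orlicz_p_norm M \<Phi> p x = 1"
proof -
  have below: "amemiya_term M \<Phi> p x k = ennreal (1 / k)" if k: "0 < k" "k < 1" for k
  proof -
    have "\<bar>k * x t\<bar> < orlicz_a \<Phi>" if "t \<in> space M" for t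
    proof -
      have "\<bar>k * x t\<bar> \<le> k * orlicz_a \<Phi>"
        using x[OF that] k by (simp add: abs_mult mult_left_mono)
      also have "\<dots> < orlicz_a \<Phi>" using k a by simp
      finally show ?thesis .
    qed
    then have "orlicz_modular M \<Phi> (\<lambda>t. k * x t) = 0" by (rule orlicz_modular_eq_0[OF \<Phi>])
    then show ?thesis using p(2) by (simp add: amemiya_term_def)
  qed
  have above: "amemiya_term M \<Phi> p x k = \<infinity>" if k: "1 < k" for k
  proof -
    have "orlicz_modular M \<Phi> (\<lambda>t. k * x t) = \<infinity>"
      by (rule orlicz_modular_eq_top[OF \<Phi> S(1,2), of "k * orlicz_a \<Phi>"])
        (use k a S(3) in \<open>auto simp: abs_mult\<close>)
    then show ?thesis by (simp add: amemiya_term_def)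
  qed
  have "1 \<le> amemiya_term M \<Phi> p x k" if k: "0 < k" for k
  proof (cases "k \<le> 1")
    case True
    then have "1 \<le> ennreal (1 / k)" using k by (simp add: ennreal_leI)
    also have "\<dots> \<le> amemiya_term M \<Phi> p x k" by (rule amemiya_term_ge_inverse[OF p k])
    finally show ?thesis .
  next
    case False
    then show ?thesis using above by simp
  qed
  then have "1 \<le> orlicz_p_norm M \<Phi> p x"
    unfolding orlicz_p_norm_eq_INF_amemiya_term by (auto intro: INF_greatest)
  moreover have "orlicz_p_norm M \<Phi> p x \<le> 1"
  proof (rule ennreal_le_epsilon)
    fix e :: real assume e: "0 < e"
    have k: "0 < 1 / (1 + e)" "1 / (1 + e) < 1" using e by auto
    have "orlicz_p_norm M \<Phi> p x \<le> amemiya_term M \<Phi> p x (1 / (1 + e))"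
      unfolding orlicz_p_norm_eq_INF_amemiya_term using k by (intro INF_lower) simp
    also have "\<dots> = 1 + ennreal e" using below[OF k] e by (simp add: ennreal_plus)
    finally show "orlicz_p_norm M \<Phi> p x \<le> 1 + ennreal e" .
  qed
  ultimately show ?thesis by simp
qed

lemma orlicz_space_if_bounded:
  assumes \<Phi>: "orlicz_function \<Phi>" and a: "0 < orlicz_a \<Phi>"
    and x: "x \<in> borel_measurable M" "\<And>t. t \<in> space M \<Longrightarrow> \<bar>x t\<bar> \<le> C"
  shows "x \<in> orlicz_space M \<Phi>"
proof -
  define c where "c = orlicz_a \<Phi> / (2 * (\<bar>C\<bar> + 1))"
  have c: "0 < c" using a by (simp add: c_def)
  have "\<bar>c * x t\<bar> < orlicz_a \<Phi>" if "t \<in> space M" for t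
  proof -
    have "\<bar>c * x t\<bar> \<le> c * (\<bar>C\<bar> + 1)"
      using x(2)[OF that] c by (simp add: abs_mult mult_left_mono)
    also have "\<dots> = orlicz_a \<Phi> / 2"
      unfolding c_def by (simp add: field_simps add_nonneg_eq_0_iff)
    also have "\<dots> < orlicz_a \<Phi>" using a by simp
    finally show ?thesis .
  qed
  then have "orlicz_modular M \<Phi> (\<lambda>t. c * x t) = 0" by (rule orlicz_modular_eq_0[OF \<Phi>])
  then show ?thesis using x(1) c unfolding orlicz_space_def by auto
qed

lemma orlicz_flat_unit_sphere:
  assumes \<Phi>: "orlicz_function \<Phi>" and a: "0 < orlicz_a \<Phi>"
    and p: "lattice_norm p" "p (1, 0) = 1"
    and M: "sigma_finite_measure M" "emeasure M (space M) = \<infinity>"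
  obtains x y where "x \<in> orlicz_space M \<Phi>" "y \<in> orlicz_space M \<Phi>"
    and "\<And>t. 0 \<le> y t" "\<And>t. y t \<le> x t" "\<not> (AE t in M. x t = y t)"
    and "orlicz_p_norm M \<Phi> p x = 1" "orlicz_p_norm M \<Phi> p y = 1"
    and "orlicz_p_norm M \<Phi> p (\<lambda>t. (x t + y t) / 2) = 1"
proof -
  obtain B where "B \<in> sets M" "emeasure M B < \<infinity>" "ennreal 0 < emeasure M B"
    by (rule sigma_finite_measure.approx_PInf_emeasure_with_finite[OF M(1) sets.top M(2)])
  then have B: "B \<in> sets M" "emeasure M B < \<infinity>" "0 < emeasure M B" by simp_all
  define S where "S = space M - B"
  have S: "S \<in> sets M" "emeasure M S = \<infinity>"
    using B M(2) emeasure_Diff[OF _ sets.top B(1) sets.sets_into_space[OF B(1)]]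
    by (auto simp: S_def ennreal_minus_top)
  define x where "x = (\<lambda>t::'a. orlicz_a \<Phi>)"
  define y where "y = (\<lambda>t. if t \<in> B then orlicz_a \<Phi> / 2 else orlicz_a \<Phi>)"
  have measurable: "x \<in> borel_measurable M" "y \<in> borel_measurable M"
    unfolding x_def y_def using B(1) by measurable
  have "{t \<in> space M. x t \<noteq> y t} = B"
    using a sets.sets_into_space[OF B(1)] by (auto simp: x_def y_def)
  then have ne: "\<not> (AE t in M. x t = y t)"
    using AE_iff_measurable[OF B(1)] B(3) by auto
  have order: "0 \<le> y t" "y t \<le> x t" for t
    using a by (auto simp: x_def y_def)
  have bounded: "\<bar>x t\<bar> \<le> orlicz_a \<Phi>" "\<bar>y t\<bar> \<le> orlicz_a \<Phi>" "\<bar>(x t + y t) / 2\<bar> \<le> orlicz_a \<Phi>"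
    for t using a by (simp_all add: x_def y_def)
  have norm_1: "orlicz_p_norm M \<Phi> p f = 1"
    if "\<And>t. \<bar>f t\<bar> \<le> orlicz_a \<Phi>" "\<And>t. t \<notin> B \<Longrightarrow> f t = orlicz_a \<Phi>" for f
    by (rule orlicz_p_norm_eq_1[OF \<Phi> a p _ S]) (use that a in \<open>auto simp: S_def\<close>)
  show ?thesis
  proof (rule that[OF _ _ order ne norm_1 norm_1 norm_1])
    show "x \<in> orlicz_space M \<Phi>" "y \<in> orlicz_space M \<Phi>"
      by (rule orlicz_space_if_bounded[OF \<Phi> a measurable(1) bounded(1)],
          rule orlicz_space_if_bounded[OF \<Phi> a measurable(2) bounded(2)])
  qed (fact bounded | simp add: x_def y_def)+
qed

theorem corollary2:
  fixes M :: "'a measure" and \<Phi> :: "real \<Rightarrow> real" and p :: "real \<times> real \<Rightarrow> real"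
  assumes "sigma_finite_measure M" and "complete_measure M"
    and "lattice_norm p" and "p (1, 0) = 1" and "p (0, 1) = 1"
    and "orlicz_function \<Phi>" and "orlicz_a \<Phi> > 0"
    and "(non_atomic M \<and> emeasure M (space M) = \<infinity>) \<or>
         (countable (space M) \<and> infinite (space M) \<and> M = count_space (space M))"
  shows "\<not> strictly_monotone_orlicz M \<Phi> p \<and> \<not> strictly_convex_orlicz M \<Phi> p"
proof -
  have "emeasure M (space M) = \<infinity>"
    using assms(8)
  proof (elim disjE conjE)
    assume "infinite (space M)" and count: "M = count_space (space M)"
    have "emeasure (count_space (space M)) (space M) = \<infinity>"
      using \<open>infinite (space M)\<close> by (simp add: emeasure_count_space_infinite)
    then show ?thesis by (simp only: count[symmetric])
  qed
  then obtain x y where xy: "x \<in> orlicz_space M \<Phi>" "y \<in> orlicz_space M \<Phi>"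
      and order: "\<And>t. 0 \<le> y t" "\<And>t. y t \<le> x t" and ne: "\<not> (AE t in M. x t = y t)"
      and norm: "orlicz_p_norm M \<Phi> p x = 1" "orlicz_p_norm M \<Phi> p y = 1"
        "orlicz_p_norm M \<Phi> p (\<lambda>t. (x t + y t) / 2) = 1"
    using orlicz_flat_unit_sphere[OF assms(6,7,3,4,1)] by blast
  have "\<not> (AE t in M. y t = x t)" using ne by (simp add: eq_commute)
  then have ordered: "(AE t in M. 0 \<le> y t) \<and> (AE t in M. y t \<le> x t) \<and> \<not> (AE t in M. y t = x t)"
    using order by simp
  have "\<not> strictly_monotone_orlicz M \<Phi> p"
  proof
    assume "strictly_monotone_orlicz M \<Phi> p"
    then have "orlicz_p_norm M \<Phi> p y < orlicz_p_norm M \<Phi> p x"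
      using xy ordered unfolding strictly_monotone_orlicz_def by blast
    with norm show False by simp
  qed
  moreover have "\<not> strictly_convex_orlicz M \<Phi> p"
  proof
    assume "strictly_convex_orlicz M \<Phi> p"
    then have "orlicz_p_norm M \<Phi> p (\<lambda>t. (x t + y t) / 2) < 1"
      using xy ne norm unfolding strictly_convex_orlicz_def by blast
    with norm show False by simp
  qed
  ultimately show ?thesis ..
qed

end
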